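(* Let $\dot{\mathbf{x}}=\mathbf{F}(\mathbf{x})$ have a stable limit cycle $\mathcal{A}$ with angular frequency $\Omega>0$ and basin $\mathcal{B}(\mathcal{A})$, whose Floquet characteristic multipliers $\mu_1,\dots,\mu_{n-1}$ are distinct with $|\mu_{n-1}|\le\cdots\le|\mu_1|<1$, and characteristic exponents $\nu_j$ ($\mu_j=e^{2\pi\nu_j/\Omega}$, $\mathrm{Re}[\nu_j]<0$). Let $L_\mathcal{B}$ be the generator of the Koopman semigroup $\{U^t_\mathcal{B}\}_{t\ge0}$ restricted to $\mathcal{B}(\mathcal{A})$, acting on the averaging kernel Hilbert space $\mathcal{S}_{\mathbf{z},\theta}$. Then for every $s\in\mathbb{C}$ with $\mathrm{Re}[s]>0$ and every $f\in\mathcal{S}_{\mathbf{z},\theta}$, $$R(s;L_\mathcal{B})f=\sum_{\substack{k_1,\dots,k_{n-1}\in\mathbb{N}_0\\ m\in\mathbb{Z}}}\frac{P_{k_1\cdots k_{n-1},m}f}{s-\{(k_1\nu_1+\cdots+k_{n-1}\nu_{n-1})+\mathrm{i}m\Omega\}},$$ the series converging in $\mathcal{S}_{\mathbf{z},\theta}$; the region of convergence of $R(s;L_\mathcal{B})$ is $\{s\in\mathbb{C}:\mathrm{Re}[s]>0\}$.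
   Context: Koopman operators $U^tf=f\circ\mathbf{S}^t$, generator $Lf=\lim_{t\downarrow0}(U^tf-f)/t$, Koopman resolvent $R(s;L)=(sI-L)^{-1}$, given for strongly continuous semigroups by $\int_0^\infty e^{-st}U^tf\,\mathrm{d}t$. In $\mathcal{B}(\mathcal{A})$ the dynamics are conjugate to $\dot{\mathbf{y}}=\mathbf{A}(\theta)\mathbf{y}$, $\dot\theta=\Omega$, with $\mathbf{y}\in\mathbb{R}^{n-1}$, $\theta\in\mathbb{T}$, $\mathbf{A}$ $2\pi$-periodic; with Floquet matrix $\mathbf{P}(\theta)$, Floquet stability matrix $\mathbf{B}$ (eigenvalues $\mu_j$) diagonalized by $\mathbf{V}$, set $\mathbf{z}(\mathbf{y},\theta)=\mathbf{V}^{-1}\mathbf{P}(\theta)^{-1}\mathbf{y}$. Then $\phi_{k_1\cdots k_{n-1},m}=z_1^{k_1}\cdots z_{n-1}^{k_{n-1}}e^{\mathrm{i}m\theta}$ is a Koopman eigenfunction with eigenvalue $k_1\nu_1+\cdots+k_{n-1}\nu_{n-1}+\mathrm{i}m\Omega$. The space $\mathcal{S}_{\mathbf{z},\theta}$ consists of functions analytic (entire) in $\mathbf{z}\in\mathbb{C}^{n-1}$ and $\mathscr{L}^2$ in $\theta\in\mathbb{T}$, expanded as $f=\sum_{k,m}\phi_{k_1\cdots k_{n-1},m}V_{k_1\cdots k_{n-1},m}$ with $\|f\|^2=\sum_{k,m}|V_{k_1\cdots k_{n-1},m}|^2k_1!\cdots k_{n-1}!$; projections $P_{k_1\cdots k_{n-1},m}f=\phi_{k_1\cdots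 k_{n-1},m}V_{k_1\cdots k_{n-1},m}$ (orthogonal). The semigroup acts as $U^t_\mathcal{B}f=\sum_{k,m}\phi_{k,m}V_{k,m}e^{(k_1\nu_1+\cdots+k_{n-1}\nu_{n-1}+\mathrm{i}m\Omega)t}$ and is strongly continuous. *)

theory Defs
  imports "HOL-Analysis.Analysis"
begin

text \<open>Model of the averaging kernel Hilbert space S_{z,theta} on the basin B(A),
 in the coordinates (z, theta) of the paper, with d = n-1 the dimension of z.
 An element f = sum phi_{k,m} V_{k,m} is represented by its coefficient family
 V indexed by multi-indices k (supported on indices 0..d-1, 0-based) and m in Z.\<close>

type_synonym idx = "(nat \<Rightarrow> nat) \<times> int"
type_synonym coeffs = "idx \<Rightarrow> complex"

definition idx_set :: "nat \<Rightarrow> idx set" where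
  "idx_set d = {(k, m). \<forall>j\<ge>d. k j = 0}"

definition weight :: "nat \<Rightarrow> idx \<Rightarrow> real" where
  "weight d i = (\<Prod>j<d. fact (fst i j))"

definition S_space :: "nat \<Rightarrow> coeffs set" where
  "S_space d = {V. (\<forall>i. i \<notin> idx_set d \<longrightarrow> V i = 0) \<and>
      (\<lambda>i. (cmod (V i))\<^sup>2 * weight d i) summable_on idx_set d}"

definition S_norm :: "nat \<Rightarrow> coeffs \<Rightarrow> real" where
  "S_norm d V = sqrt (\<Sum>\<^sub>\<infinity>i\<in>idx_set d. (cmod (V i))\<^sup>2 * weight d i)"

definition S_tendsto :: "nat \<Rightarrow> ('a \<Rightarrow> coeffs) \<Rightarrow> coeffs \<Rightarrow> 'a filter \<Rightarrow> bool" where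
  "S_tendsto d F g Fl \<longleftrightarrow> g \<in> S_space d \<and> (\<forall>\<^sub>F x in Fl. F x \<in> S_space d) \<and>
      ((\<lambda>x. S_norm d (\<lambda>i. F x i - g i)) \<longlongrightarrow> 0) Fl"

definition eig :: "nat \<Rightarrow> (nat \<Rightarrow> complex) \<Rightarrow> real \<Rightarrow> idx \<Rightarrow> complex" where
  "eig d \<nu> \<Omega> i = (\<Sum>j<d. of_nat (fst i j) * \<nu> j) + \<i> * of_int (snd i) * of_real \<Omega>"

definition koopman_sg :: "nat \<Rightarrow> (nat \<Rightarrow> complex) \<Rightarrow> real \<Rightarrow> real \<Rightarrow> coeffs \<Rightarrow> coeffs" where
  "koopman_sg d \<nu> \<Omega> t V = (\<lambda>i. exp (eig d \<nu> \<Omega> i * of_real t) * V i)"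

definition proj :: "idx \<Rightarrow> coeffs \<Rightarrow> coeffs" where
  "proj i V = (\<lambda>j. if j = i then V i else 0)"

definition gen_dom :: "nat \<Rightarrow> (nat \<Rightarrow> complex) \<Rightarrow> real \<Rightarrow> coeffs set" where
  "gen_dom d \<nu> \<Omega> = {V \<in> S_space d. \<exists>W. S_tendsto d
      (\<lambda>t. \<lambda>i. (koopman_sg d \<nu> \<Omega> t V i - V i) / of_real t) W (at_right 0)}"

definition gen :: "nat \<Rightarrow> (nat \<Rightarrow> complex) \<Rightarrow> real \<Rightarrow> coeffs \<Rightarrow> coeffs" where
  "gen d \<nu> \<Omega> V = (THE W. S_tendsto d
      (\<lambda>t. \<lambda>i. (koopman_sg d \<nu> \<Omega> t V i - V i) / of_real t) W (at_right 0))"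

definition koopman_resolvent_set :: "nat \<Rightarrow> (nat \<Rightarrow> complex) \<Rightarrow> real \<Rightarrow> complex set" where
  "koopman_resolvent_set d \<nu> \<Omega> = {s.
      bij_betw (\<lambda>V. \<lambda>i. s * V i - gen d \<nu> \<Omega> V i) (gen_dom d \<nu> \<Omega>) (S_space d) \<and>
      (\<exists>C. \<forall>V\<in>gen_dom d \<nu> \<Omega>.
          S_norm d V \<le> C * S_norm d (\<lambda>i. s * V i - gen d \<nu> \<Omega> V i))}"

definition koopman_resolvent :: "nat \<Rightarrow> (nat \<Rightarrow> complex) \<Rightarrow> real \<Rightarrow> complex \<Rightarrow> coeffs \<Rightarrow> coeffs" where
  "koopman_resolvent d \<nu> \<Omega> s f = (THE g. g \<in> gen_dom d \<nu> \<Omega> \<and>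
      (\<lambda>i. s * g i - gen d \<nu> \<Omega> g i) = f)"

definition S_has_sum :: "nat \<Rightarrow> (idx \<Rightarrow> coeffs) \<Rightarrow> coeffs \<Rightarrow> bool" where
  "S_has_sum d F g \<longleftrightarrow> S_tendsto d (\<lambda>X. \<lambda>j. \<Sum>i\<in>X. F i j) g
      (finite_subsets_at_top (idx_set d))"

definition laplace_partial :: "nat \<Rightarrow> (nat \<Rightarrow> complex) \<Rightarrow> real \<Rightarrow> complex \<Rightarrow> coeffs \<Rightarrow> real \<Rightarrow> coeffs" where
  "laplace_partial d \<nu> \<Omega> s f T =
     (\<lambda>i. integral {0..T} (\<lambda>t. exp (- s * of_real t) * koopman_sg d \<nu> \<Omega> t f i))"

definition laplace_converges :: "nat \<Rightarrow> (nat \<Rightarrow> complex) \<Rightarrow> real \<Rightarrow> complex \<Rightarrow> coeffs \<Rightarrow> bool" where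
  "laplace_converges d \<nu> \<Omega> s f \<longleftrightarrow> (\<exists>g. S_tendsto d (laplace_partial d \<nu> \<Omega> s f) g at_top)"

end

theory Submission
  imports Defs
begin

text \<open>In the coordinates (z, theta) the Koopman semigroup is diagonal in the eigenfunctions
  phi_{k,m}: it multiplies the coefficient V_{k,m} by e^{lambda t}, lambda = k_1 nu_1 + ... +
  k_{n-1} nu_{n-1} + i m Omega, and Re lambda \<le> 0. Hence the generator is multiplication by lambda
  on its maximal domain, and for Re s > 0 the multiplier 1/(s - lambda) is bounded by 1/Re s, so
  (sI - L)^{-1} is the bounded diagonal operator whose unconditionally convergent expansion is the
  stated series. The truncated Laplace integral differs from it by the multiplier
  -e^{(lambda - s) T}/(s - lambda), of size at most e^{-T Re s}/Re s. For Re s \<le> 0 the integral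
  already diverges on the constant eigenfunction phi_{0,0}, where it equals the integral of
  e^{-st} over [0, T].\<close>

section \<open>The weighted sequence space\<close>

lemma infsum_tendsto_0_dominated:
  fixes a :: "'i \<Rightarrow> real" and b :: "'x \<Rightarrow> 'i \<Rightarrow> real"
  assumes a: "a summable_on I"
    and bounded: "\<forall>\<^sub>F x in F. \<forall>i\<in>I. 0 \<le> b x i \<and> b x i \<le> a i"
    and pointwise: "\<And>i. i \<in> I \<Longrightarrow> ((\<lambda>x. b x i) \<longlongrightarrow> 0) F"
  shows "((\<lambda>x. infsum (b x) I) \<longlongrightarrow> 0) F"
proof (rule order_tendstoI)
  fix e :: real assume "e < 0"
  show "\<forall>\<^sub>F x in F. e < infsum (b x) I"
    using bounded by eventually_elim (use \<open>e < 0\<close> in \<open>auto intro: less_le_trans[OF _ infsum_nonneg]\<close>)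
next
  fix e :: real assume e: "0 < e"
  have "\<forall>\<^sub>F X in finite_subsets_at_top I. dist (sum a X) (infsum a I) < e / 2"
    using infsum_tendsto[OF a] e by (intro tendstoD) auto
  then obtain X where X: "finite X" "X \<subseteq> I" and "dist (sum a X) (infsum a I) < e / 2"
    unfolding eventually_finite_subsets_at_top by blast
  moreover have "infsum a (I - X) = infsum a I - sum a X"
    using infsum_Diff[OF a summable_on_finite X(2)] X(1) by simp
  ultimately have tail: "infsum a (I - X) < e / 2"
    unfolding dist_real_def by linarith
  have "((\<lambda>x. \<Sum>i\<in>X. b x i) \<longlongrightarrow> (\<Sum>i\<in>X. 0)) F"
    using X by (intro tendsto_sum pointwise) auto
  then have "\<forall>\<^sub>F x in F. (\<Sum>i\<in>X. b x i) < e / 2"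
    using e by (intro order_tendstoD) auto
  with bounded show "\<forall>\<^sub>F x in F. infsum (b x) I < e"
  proof eventually_elim
    case (elim x)
    have "b x summable_on I"
      by (rule summable_on_comparison_test[OF a]) (use elim in auto)
    then have "infsum (b x) I = (\<Sum>i\<in>X. b x i) + infsum (b x) (I - X)"
      using infsum_Diff[OF _ summable_on_finite X(2)] X(1) by fastforce
    also have "infsum (b x) (I - X) \<le> infsum a (I - X)"
      using elim(1) by (intro infsum_mono summable_on_subset_banach[OF \<open>b x summable_on I\<close>]
          summable_on_subset_banach[OF a]) auto
    finally show ?case using elim(2) tail by linarith
  qed
qed

lemma weight_ge_1: "1 \<le> weight d i"
  unfolding weight_def by (rule prod_ge_1) (simp add: fact_ge_1)

lemma S_norm_term_nonneg: "0 \<le> (cmod (V i))\<^sup>2 * weight d i"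
  using weight_ge_1[of d i] by simp

definition S_norm_sq :: "nat \<Rightarrow> coeffs \<Rightarrow> real" where
  "S_norm_sq d V = (\<Sum>\<^sub>\<infinity>i\<in>idx_set d. (cmod (V i))\<^sup>2 * weight d i)"

lemma S_norm_eq_sqrt: "S_norm d V = sqrt (S_norm_sq d V)"
  by (simp add: S_norm_def S_norm_sq_def)

lemma S_norm_sq_nonneg: "0 \<le> S_norm_sq d V"
  unfolding S_norm_sq_def by (rule infsum_nonneg) (rule S_norm_term_nonneg)

lemma S_norm_nonneg: "0 \<le> S_norm d V"
  by (simp add: S_norm_eq_sqrt S_norm_sq_nonneg)

lemma S_norm_term_mult_le:
  assumes "cmod c \<le> C"
  shows "(cmod (c * V i))\<^sup>2 * weight d i \<le> C\<^sup>2 * ((cmod (V i))\<^sup>2 * weight d i)"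
proof -
  have "(cmod c)\<^sup>2 * ((cmod (V i))\<^sup>2 * weight d i) \<le> C\<^sup>2 * ((cmod (V i))\<^sup>2 * weight d i)"
    using assms by (intro mult_right_mono power_mono S_norm_term_nonneg) simp_all
  then show ?thesis
    by (simp add: norm_mult power_mult_distrib mult.assoc)
qed

lemma S_space_summable:
  "V \<in> S_space d \<Longrightarrow> (\<lambda>i. (cmod (V i))\<^sup>2 * weight d i) summable_on idx_set d"
  by (simp add: S_space_def)

lemma S_space_mult:
  assumes V: "V \<in> S_space d" and m: "\<And>i. cmod (m i) \<le> C"
  shows "(\<lambda>i. m i * V i) \<in> S_space d"
    and "S_norm d (\<lambda>i. m i * V i) \<le> C * S_norm d V"
proof -
  have "0 \<le> C" using order_trans[OF norm_ge_zero m] .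
  have le: "(cmod (m i * V i))\<^sup>2 * weight d i \<le> C\<^sup>2 * ((cmod (V i))\<^sup>2 * weight d i)" for i
    by (rule S_norm_term_mult_le[OF m])
  have summ_C: "(\<lambda>i. C\<^sup>2 * ((cmod (V i))\<^sup>2 * weight d i)) summable_on idx_set d"
    by (intro summable_on_cmult_right S_space_summable V)
  have summ: "(\<lambda>i. (cmod (m i * V i))\<^sup>2 * weight d i) summable_on idx_set d"
    by (rule summable_on_comparison_test[OF summ_C]) (use le S_norm_term_nonneg in auto)
  then show "(\<lambda>i. m i * V i) \<in> S_space d"
    using V by (simp add: S_space_def)
  have "S_norm_sq d (\<lambda>i. m i * V i) \<le> C\<^sup>2 * S_norm_sq d V"
    unfolding S_norm_sq_def infsum_cmult_right'[symmetric] by (rule infsum_mono[OF summ summ_C le])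
  then have "S_norm d (\<lambda>i. m i * V i) \<le> sqrt (C\<^sup>2 * S_norm_sq d V)"
    by (simp add: S_norm_eq_sqrt)
  also have "\<dots> = C * S_norm d V"
    using \<open>0 \<le> C\<close> by (simp add: S_norm_eq_sqrt real_sqrt_mult)
  finally show "S_norm d (\<lambda>i. m i * V i) \<le> C * S_norm d V" .
qed

lemma S_space_diff:
  assumes U: "U \<in> S_space d" and V: "V \<in> S_space d"
  shows "(\<lambda>i. U i - V i) \<in> S_space d"
proof -
  have le: "(cmod (U i - V i))\<^sup>2 * weight d i
      \<le> 2 * ((cmod (U i))\<^sup>2 * weight d i) + 2 * ((cmod (V i))\<^sup>2 * weight d i)" for i
  proof -
    have "(cmod (U i - V i))\<^sup>2 \<le> (cmod (U i) + cmod (V i))\<^sup>2"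
      by (intro power_mono norm_triangle_ineq4) simp
    also have "\<dots> \<le> 2 * (cmod (U i))\<^sup>2 + 2 * (cmod (V i))\<^sup>2"
      using zero_le_power2[of "cmod (U i) - cmod (V i)"]
      unfolding power2_sum power2_diff by linarith
    finally have "(cmod (U i - V i))\<^sup>2 * weight d i
        \<le> (2 * (cmod (U i))\<^sup>2 + 2 * (cmod (V i))\<^sup>2) * weight d i"
      by (rule mult_right_mono) (use weight_ge_1[of d i] in simp)
    then show ?thesis
      by (simp add: algebra_simps)
  qed
  have "(\<lambda>i. 2 * ((cmod (U i))\<^sup>2 * weight d i) + 2 * ((cmod (V i))\<^sup>2 * weight d i)) summable_on idx_set d"
    by (intro summable_on_add summable_on_cmult_right S_space_summable U V)
  then have "(\<lambda>i. (cmod (U i - V i))\<^sup>2 * weight d i) summable_on idx_set d"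
    by (rule summable_on_comparison_test) (use le S_norm_term_nonneg in auto)
  then show ?thesis
    using U V by (simp add: S_space_def)
qed

lemma norm_coeff_le_S_norm:
  assumes V: "V \<in> S_space d" and i: "i \<in> idx_set d"
  shows "cmod (V i) \<le> S_norm d V"
proof -
  have "(cmod (V i))\<^sup>2 \<le> (cmod (V i))\<^sup>2 * weight d i"
    using weight_ge_1[of d i] by (simp add: mult_le_cancel_left1)
  also have "\<dots> = (\<Sum>j\<in>{i}. (cmod (V j))\<^sup>2 * weight d j)"
    by simp
  also have "\<dots> \<le> S_norm_sq d V"
    unfolding S_norm_sq_def
    by (rule finite_sum_le_infsum[OF S_space_summable[OF V]]) (use i S_norm_term_nonneg in auto)
  finally show ?thesis
    by (simp add: S_norm_eq_sqrt real_le_rsqrt)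
qed

lemma S_norm_mult_tendsto_0:
  assumes V: "V \<in> S_space d" and bounded: "\<forall>\<^sub>F x in F. \<forall>i. cmod (q x i) \<le> C"
    and pointwise: "\<And>i. i \<in> idx_set d \<Longrightarrow> ((\<lambda>x. q x i) \<longlongrightarrow> 0) F"
  shows "((\<lambda>x. S_norm d (\<lambda>i. q x i * V i)) \<longlongrightarrow> 0) F"
proof -
  have "((\<lambda>x. S_norm_sq d (\<lambda>i. q x i * V i)) \<longlongrightarrow> 0) F"
    unfolding S_norm_sq_def
  proof (rule infsum_tendsto_0_dominated)
    show "(\<lambda>i. C\<^sup>2 * ((cmod (V i))\<^sup>2 * weight d i)) summable_on idx_set d"
      by (intro summable_on_cmult_right S_space_summable V)
    show "\<forall>\<^sub>F x in F. \<forall>i\<in>idx_set d. 0 \<le> (cmod (q x i * V i))\<^sup>2 * weight d i \<and>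
        (cmod (q x i * V i))\<^sup>2 * weight d i \<le> C\<^sup>2 * ((cmod (V i))\<^sup>2 * weight d i)"
      using bounded
      by eventually_elim (auto intro: S_norm_term_mult_le S_norm_term_nonneg)
    show "((\<lambda>x. (cmod (q x i * V i))\<^sup>2 * weight d i) \<longlongrightarrow> 0) F" if "i \<in> idx_set d" for i
    proof -
      have "((\<lambda>x. (cmod (q x i))\<^sup>2 * ((cmod (V i))\<^sup>2 * weight d i))
          \<longlongrightarrow> (cmod 0)\<^sup>2 * ((cmod (V i))\<^sup>2 * weight d i)) F"
        by (intro tendsto_mult tendsto_power tendsto_norm pointwise that tendsto_const)
      then show ?thesis
        by (simp add: norm_mult power_mult_distrib mult.assoc)
    qed
  qed
  then show ?thesis
    unfolding S_norm_eq_sqrt using tendsto_real_sqrt by fastforce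
qed

lemma S_tendsto_coeff:
  assumes lim: "S_tendsto d F g Fl" and i: "i \<in> idx_set d"
  shows "((\<lambda>x. F x i) \<longlongrightarrow> g i) Fl"
proof -
  have g: "g \<in> S_space d" and F: "\<forall>\<^sub>F x in Fl. F x \<in> S_space d"
    and norm_lim: "((\<lambda>x. S_norm d (\<lambda>i. F x i - g i)) \<longlongrightarrow> 0) Fl"
    using lim by (auto simp: S_tendsto_def)
  from F have "\<forall>\<^sub>F x in Fl. norm (F x i - g i) \<le> S_norm d (\<lambda>i. F x i - g i)"
    by eventually_elim (rule norm_coeff_le_S_norm[OF S_space_diff[OF _ g] i])
  then have "((\<lambda>x. F x i - g i) \<longlongrightarrow> 0) Fl"
    by (rule Lim_null_comparison[OF _ norm_lim])
  then show ?thesis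
    by (simp add: LIM_zero_iff)
qed

lemma S_tendsto_eventually_cong:
  assumes "\<forall>\<^sub>F x in Fl. F x = G x" and "S_tendsto d F g Fl"
  shows "S_tendsto d G g Fl"
proof -
  have "\<forall>\<^sub>F x in Fl. F x \<in> S_space d"
    using assms(2) by (simp add: S_tendsto_def)
  with assms(1) have "\<forall>\<^sub>F x in Fl. G x \<in> S_space d"
    by eventually_elim simp
  moreover have "((\<lambda>x. S_norm d (\<lambda>i. F x i - g i)) \<longlongrightarrow> 0) Fl"
    using assms(2) by (simp add: S_tendsto_def)
  then have "((\<lambda>x. S_norm d (\<lambda>i. G x i - g i)) \<longlongrightarrow> 0) Fl"
    by (rule Lim_transform_eventually) (use assms(1) in \<open>auto elim: eventually_mono\<close>)
  ultimately show ?thesis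
    using assms(2) by (simp add: S_tendsto_def)
qed

lemma S_tendsto_truncations:
  assumes g: "g \<in> S_space d"
  shows "S_tendsto d (\<lambda>X j. if j \<in> X then g j else 0) g (finite_subsets_at_top (idx_set d))"
proof -
  have "(\<lambda>j. (if j \<in> X then 1 else 0) * g j) \<in> S_space d" for X
    by (rule S_space_mult(1)[OF g, of _ 1]) simp
  moreover have "((\<lambda>X. S_norm d (\<lambda>j. (if j \<in> X then 0 else - 1) * g j)) \<longlongrightarrow> 0)
      (finite_subsets_at_top (idx_set d))"
  proof (rule S_norm_mult_tendsto_0[OF g, of _ 1])
    show "((\<lambda>X. if j \<in> X then 0 else - 1) \<longlongrightarrow> 0) (finite_subsets_at_top (idx_set d))"
      if "j \<in> idx_set d" for j
      by (rule tendsto_eventually) (use that in \<open>auto simp: eventually_finite_subsets_at_top\<close>)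
  qed simp
  ultimately show ?thesis
    by (simp add: S_tendsto_def g if_distrib[of "\<lambda>x. x * _"] if_distrib[of "\<lambda>x. x - _"] cong: if_cong)
qed

section \<open>The Koopman generator\<close>

lemma Re_eig_nonpos:
  assumes "\<forall>j<d. Re (\<nu> j) \<le> 0"
  shows "Re (eig d \<nu> \<Omega> i) \<le> 0"
  unfolding eig_def using assms by (auto intro!: sum_nonpos mult_nonneg_nonpos)

lemma norm_exp_minus_1_le:
  fixes z :: complex
  assumes "Re z \<le> 0"
  shows "cmod (exp z - 1) \<le> cmod z"
proof -
  have "cmod (exp z - exp 0) \<le> 1 * cmod (z - 0)"
  proof (rule field_differentiable_bound[of "{w. Re w \<le> 0}" exp exp])
    show "(exp has_field_derivative exp w) (at w within {w. Re w \<le> 0})" for w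
      by (auto intro!: derivative_eq_intros)
    show "cmod (exp w) \<le> 1" if "w \<in> {w. Re w \<le> 0}" for w
      using that by (simp add: norm_exp_eq_Re)
  qed (use assms convex_halfspace_Re_le in auto)
  then show ?thesis
    by simp
qed

lemma exp_difference_quotient_tendsto:
  "((\<lambda>t::real. (exp (c * of_real t) - 1) / of_real t) \<longlongrightarrow> (c::complex)) (at_right 0)"
proof -
  have "((\<lambda>z. exp (c * z)) has_field_derivative c) (at 0)"
    by (auto intro!: derivative_eq_intros)
  then have "((\<lambda>z. (exp (c * z) - 1) / z) \<longlongrightarrow> c) (at 0)"
    unfolding has_field_derivative_iff by simp
  moreover have "filterlim (\<lambda>t::real. complex_of_real t) (at 0) (at_right 0)"
    unfolding filterlim_at
    by (auto intro!: tendsto_eq_intros eventually_mono[OF eventually_at_right_less[of 0]])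
  ultimately show ?thesis
    by (rule filterlim_compose)
qed

lemma koopman_generator_tendsto:
  assumes \<nu>: "\<forall>j<d. Re (\<nu> j) \<le> 0" and V: "V \<in> S_space d"
    and LV: "(\<lambda>i. eig d \<nu> \<Omega> i * V i) \<in> S_space d"
  shows "S_tendsto d (\<lambda>t i. (koopman_sg d \<nu> \<Omega> t V i - V i) / of_real t)
      (\<lambda>i. eig d \<nu> \<Omega> i * V i) (at_right 0)"
proof -
  define L where "L = eig d \<nu> \<Omega>"
  \<comment> \<open>The rescaled difference quotient: modulus \<le> 1 and pointwise limit 1, so dominated convergence
    applies.\<close>
  define m where "m t i = (if L i = 0 then 1 else (exp (L i * of_real t) - 1) / (of_real t * L i))"
    for t :: real and i
  have quotient: "(koopman_sg d \<nu> \<Omega> t V i - V i) / of_real t = m t i * (L i * V i)" if "t > 0" for t i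
    using that by (auto simp: m_def koopman_sg_def L_def field_simps)
  have m_le: "cmod (m t i) \<le> 1" if "t > 0" for t i
  proof (cases "L i = 0")
    case False
    have "Re (L i * of_real t) \<le> 0"
      using Re_eig_nonpos[OF \<nu>] that by (simp add: L_def mult_nonpos_nonneg)
    then have "cmod (exp (L i * of_real t) - 1) \<le> cmod (of_real t * L i)"
      using norm_exp_minus_1_le by (simp add: mult.commute)
    then show ?thesis
      using False that by (simp add: m_def norm_divide divide_le_eq)
  qed (simp add: m_def)
  have m_tendsto: "((\<lambda>t. m t i) \<longlongrightarrow> 1) (at_right 0)" for i
  proof (cases "L i = 0")
    case False
    have "((\<lambda>t. (exp (L i * of_real t) - 1) / of_real t / L i) \<longlongrightarrow> L i / L i) (at_right 0)"
      by (intro tendsto_divide exp_difference_quotient_tendsto tendsto_const False)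
    then show ?thesis
      using False by (simp add: m_def divide_divide_eq_left)
  qed (simp add: m_def)
  have pos: "\<forall>\<^sub>F t in at_right (0::real). 0 < t"
    by (rule eventually_at_right_less)
  have "\<forall>\<^sub>F t in at_right 0. (\<lambda>i. (koopman_sg d \<nu> \<Omega> t V i - V i) / of_real t) \<in> S_space d"
    using pos by eventually_elim (simp add: quotient S_space_mult(1)[OF LV[folded L_def] m_le])
  moreover have "((\<lambda>t. S_norm d (\<lambda>i. (m t i - 1) * (L i * V i))) \<longlongrightarrow> 0) (at_right 0)"
  proof (rule S_norm_mult_tendsto_0[OF LV[folded L_def], where C=2])
    show "\<forall>\<^sub>F t in at_right 0. \<forall>i. cmod (m t i - 1) \<le> 2"
      using pos by eventually_elim (use m_le norm_triangle_ineq4 in \<open>fastforce intro: order_trans\<close>)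
    show "((\<lambda>t. m t i - 1) \<longlongrightarrow> 0) (at_right 0)" for i
      using tendsto_diff[OF m_tendsto tendsto_const, of i 1] by simp
  qed
  then have "((\<lambda>t. S_norm d (\<lambda>i. (koopman_sg d \<nu> \<Omega> t V i - V i) / of_real t - L i * V i)) \<longlongrightarrow> 0)
      (at_right 0)"
    by (rule Lim_transform_eventually) (use pos in \<open>eventually_elim, simp add: quotient algebra_simps\<close>)
  ultimately show ?thesis
    using LV by (simp add: S_tendsto_def L_def)
qed

lemma koopman_generator_limit_eq:
  assumes V: "V \<in> S_space d"
    and lim: "S_tendsto d (\<lambda>t i. (koopman_sg d \<nu> \<Omega> t V i - V i) / of_real t) W (at_right 0)"
  shows "W = (\<lambda>i. eig d \<nu> \<Omega> i * V i)"
proof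
  fix i
  show "W i = eig d \<nu> \<Omega> i * V i"
  proof (cases "i \<in> idx_set d")
    case True
    have "((\<lambda>t. (exp (eig d \<nu> \<Omega> i * of_real t) - 1) / of_real t * V i) \<longlongrightarrow> eig d \<nu> \<Omega> i * V i)
        (at_right 0)"
      by (intro tendsto_mult exp_difference_quotient_tendsto tendsto_const)
    then have "((\<lambda>t. (koopman_sg d \<nu> \<Omega> t V i - V i) / of_real t) \<longlongrightarrow> eig d \<nu> \<Omega> i * V i) (at_right 0)"
      by (simp add: koopman_sg_def field_simps)
    then show ?thesis
      using tendsto_unique[OF _ S_tendsto_coeff[OF lim True]] by simp
  next
    case False
    then have "W i = 0" "V i = 0"
      using lim V unfolding S_tendsto_def S_space_def by blast+
    then show ?thesis
      by simp
  qed
qed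

lemma gen_dom_iff:
  assumes "\<forall>j<d. Re (\<nu> j) \<le> 0"
  shows "V \<in> gen_dom d \<nu> \<Omega> \<longleftrightarrow> V \<in> S_space d \<and> (\<lambda>i. eig d \<nu> \<Omega> i * V i) \<in> S_space d"
proof
  assume "V \<in> gen_dom d \<nu> \<Omega>"
  then obtain W where V: "V \<in> S_space d"
    and lim: "S_tendsto d (\<lambda>t i. (koopman_sg d \<nu> \<Omega> t V i - V i) / of_real t) W (at_right 0)"
    unfolding gen_dom_def by blast
  moreover have "W \<in> S_space d"
    using lim by (simp add: S_tendsto_def)
  ultimately show "V \<in> S_space d \<and> (\<lambda>i. eig d \<nu> \<Omega> i * V i) \<in> S_space d"
    using koopman_generator_limit_eq[OF V lim] by simp
next
  assume "V \<in> S_space d \<and> (\<lambda>i. eig d \<nu> \<Omega> i * V i) \<in> S_space d"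
  then show "V \<in> gen_dom d \<nu> \<Omega>"
    unfolding gen_dom_def using koopman_generator_tendsto[OF assms] by blast
qed

lemma gen_eq:
  assumes "V \<in> gen_dom d \<nu> \<Omega>"
  shows "gen d \<nu> \<Omega> V = (\<lambda>i. eig d \<nu> \<Omega> i * V i)"
proof -
  obtain W where V: "V \<in> S_space d"
    and lim: "S_tendsto d (\<lambda>t i. (koopman_sg d \<nu> \<Omega> t V i - V i) / of_real t) W (at_right 0)"
    using assms unfolding gen_dom_def by blast
  show ?thesis
    unfolding gen_def
    by (rule the1_equality) (use lim koopman_generator_limit_eq[OF V] in blast)+
qed

section \<open>The Koopman resolvent\<close>

lemma Re_le_norm_minus_eig:
  assumes "\<forall>j<d. Re (\<nu> j) \<le> 0"
  shows "Re s \<le> cmod (s - eig d \<nu> \<Omega> i)"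
proof -
  have "Re s \<le> Re (s - eig d \<nu> \<Omega> i)"
    using Re_eig_nonpos[OF assms] by simp
  also have "\<dots> \<le> cmod (s - eig d \<nu> \<Omega> i)"
    by (rule complex_Re_le_cmod)
  finally show ?thesis .
qed

lemma minus_eig_nonzero:
  assumes "\<forall>j<d. Re (\<nu> j) \<le> 0" and "0 < Re s"
  shows "s - eig d \<nu> \<Omega> i \<noteq> 0"
  using Re_le_norm_minus_eig[OF assms(1), of s \<Omega> i] assms(2) by auto

definition diag_resolvent :: "nat \<Rightarrow> (nat \<Rightarrow> complex) \<Rightarrow> real \<Rightarrow> complex \<Rightarrow> coeffs \<Rightarrow> coeffs" where
  "diag_resolvent d \<nu> \<Omega> s f = (\<lambda>i. f i / (s - eig d \<nu> \<Omega> i))"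

lemma diag_resolvent_S_space:
  assumes \<nu>: "\<forall>j<d. Re (\<nu> j) \<le> 0" and s: "0 < Re s" and f: "f \<in> S_space d"
  shows "diag_resolvent d \<nu> \<Omega> s f \<in> S_space d"
    and "S_norm d (diag_resolvent d \<nu> \<Omega> s f) \<le> 1 / Re s * S_norm d f"
proof -
  have bound: "cmod (1 / (s - eig d \<nu> \<Omega> i)) \<le> 1 / Re s" for i
    using Re_le_norm_minus_eig[OF \<nu>, of s \<Omega> i] minus_eig_nonzero[OF \<nu> s] s
    by (simp add: norm_divide frac_le)
  have eq: "diag_resolvent d \<nu> \<Omega> s f = (\<lambda>i. 1 / (s - eig d \<nu> \<Omega> i) * f i)"
    by (simp add: diag_resolvent_def)
  show "diag_resolvent d \<nu> \<Omega> s f \<in> S_space d"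
    unfolding eq by (rule S_space_mult(1)[OF f bound])
  show "S_norm d (diag_resolvent d \<nu> \<Omega> s f) \<le> 1 / Re s * S_norm d f"
    unfolding eq by (rule S_space_mult(2)[OF f bound])
qed

lemma diag_resolvent_gen_dom:
  assumes \<nu>: "\<forall>j<d. Re (\<nu> j) \<le> 0" and s: "0 < Re s" and f: "f \<in> S_space d"
  shows "diag_resolvent d \<nu> \<Omega> s f \<in> gen_dom d \<nu> \<Omega>"
proof -
  have bound: "cmod (eig d \<nu> \<Omega> i / (s - eig d \<nu> \<Omega> i)) \<le> cmod s / Re s + 1" for i
  proof -
    have "eig d \<nu> \<Omega> i / (s - eig d \<nu> \<Omega> i) = s / (s - eig d \<nu> \<Omega> i) - 1"
      using minus_eig_nonzero[OF \<nu> s] by (simp add: field_simps)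
    then have "cmod (eig d \<nu> \<Omega> i / (s - eig d \<nu> \<Omega> i)) \<le> cmod s / cmod (s - eig d \<nu> \<Omega> i) + 1"
      using norm_triangle_ineq4[of "s / (s - eig d \<nu> \<Omega> i)" 1] by (simp add: norm_divide)
    also have "cmod s / cmod (s - eig d \<nu> \<Omega> i) \<le> cmod s / Re s"
      using Re_le_norm_minus_eig[OF \<nu>, of s \<Omega> i] s by (intro divide_left_mono mult_pos_pos) auto
    finally show ?thesis
      by simp
  qed
  have "(\<lambda>i. eig d \<nu> \<Omega> i / (s - eig d \<nu> \<Omega> i) * f i) \<in> S_space d"
    by (rule S_space_mult(1)[OF f bound])
  then show ?thesis
    using gen_dom_iff[OF \<nu>] diag_resolvent_S_space(1)[OF \<nu> s f] by (simp add: diag_resolvent_def)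
qed

lemma shifted_gen_eq_iff:
  assumes \<nu>: "\<forall>j<d. Re (\<nu> j) \<le> 0" and s: "0 < Re s" and V: "V \<in> gen_dom d \<nu> \<Omega>"
  shows "(\<lambda>i. s * V i - gen d \<nu> \<Omega> V i) = f \<longleftrightarrow> V = diag_resolvent d \<nu> \<Omega> s f"
proof -
  have "s * V i - eig d \<nu> \<Omega> i * V i = f i \<longleftrightarrow> V i = f i / (s - eig d \<nu> \<Omega> i)" for i
    using minus_eig_nonzero[OF \<nu> s] by (auto simp: field_simps)
  then show ?thesis
    by (auto simp: gen_eq[OF V] diag_resolvent_def fun_eq_iff)
qed

lemma koopman_resolvent_eq:
  assumes \<nu>: "\<forall>j<d. Re (\<nu> j) \<le> 0" and s: "0 < Re s" and f: "f \<in> S_space d"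
  shows "koopman_resolvent d \<nu> \<Omega> s f = diag_resolvent d \<nu> \<Omega> s f"
  unfolding koopman_resolvent_def
  using diag_resolvent_gen_dom[OF \<nu> s f] shifted_gen_eq_iff[OF \<nu> s] by blast

lemma mem_koopman_resolvent_set:
  assumes \<nu>: "\<forall>j<d. Re (\<nu> j) \<le> 0" and s: "0 < Re s"
  shows "s \<in> koopman_resolvent_set d \<nu> \<Omega>"
proof -
  let ?T = "\<lambda>V i. s * V i - gen d \<nu> \<Omega> V i"
  have T_inverse: "diag_resolvent d \<nu> \<Omega> s (?T V) = V" if "V \<in> gen_dom d \<nu> \<Omega>" for V
    using shifted_gen_eq_iff[OF \<nu> s that, of "?T V"] by simp
  have T_S_space: "?T V \<in> S_space d" if V: "V \<in> gen_dom d \<nu> \<Omega>" for V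
  proof -
    have VS: "V \<in> S_space d" and LV: "(\<lambda>i. eig d \<nu> \<Omega> i * V i) \<in> S_space d"
      using V gen_dom_iff[OF \<nu>] by blast+
    have "(\<lambda>i. s * V i) \<in> S_space d"
      by (rule S_space_mult(1)[OF VS, where C="cmod s"]) simp
    then have "(\<lambda>i. s * V i - eig d \<nu> \<Omega> i * V i) \<in> S_space d"
      using LV by (rule S_space_diff)
    then show ?thesis
      by (simp add: gen_eq[OF V])
  qed
  have "inj_on ?T (gen_dom d \<nu> \<Omega>)"
    by (rule inj_on_inverseI[where g="diag_resolvent d \<nu> \<Omega> s"]) (rule T_inverse)
  moreover have "?T ` gen_dom d \<nu> \<Omega> = S_space d"
  proof (intro subset_antisym image_subsetI subsetI)
    fix f assume f: "f \<in> S_space d"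
    have "?T (diag_resolvent d \<nu> \<Omega> s f) = f"
      using shifted_gen_eq_iff[OF \<nu> s diag_resolvent_gen_dom[OF \<nu> s f]] by blast
    then show "f \<in> ?T ` gen_dom d \<nu> \<Omega>"
      using diag_resolvent_gen_dom[OF \<nu> s f] by (blast intro: image_eqI[OF sym])
  qed (rule T_S_space)
  moreover have "S_norm d V \<le> 1 / Re s * S_norm d (?T V)" if "V \<in> gen_dom d \<nu> \<Omega>" for V
    using diag_resolvent_S_space(2)[OF \<nu> s T_S_space[OF that], where \<Omega>=\<Omega>]
    by (simp add: T_inverse[OF that])
  ultimately show ?thesis
    unfolding koopman_resolvent_set_def bij_betw_def by blast
qed

lemma koopman_resolvent_has_sum:
  assumes \<nu>: "\<forall>j<d. Re (\<nu> j) \<le> 0" and s: "0 < Re s" and f: "f \<in> S_space d"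
  shows "S_has_sum d (\<lambda>i j. proj i f j / (s - eig d \<nu> \<Omega> i)) (koopman_resolvent d \<nu> \<Omega> s f)"
proof -
  have partial_sum: "(\<lambda>j. \<Sum>i\<in>X. proj i f j / (s - eig d \<nu> \<Omega> i))
      = (\<lambda>j. if j \<in> X then diag_resolvent d \<nu> \<Omega> s f j else 0)" if "finite X" for X
  proof
    fix j
    have "(\<Sum>i\<in>X. proj i f j / (s - eig d \<nu> \<Omega> i))
        = (\<Sum>i\<in>X. if i = j then diag_resolvent d \<nu> \<Omega> s f j else 0)"
      by (rule sum.cong) (auto simp: proj_def diag_resolvent_def)
    then show "(\<Sum>i\<in>X. proj i f j / (s - eig d \<nu> \<Omega> i))
        = (if j \<in> X then diag_resolvent d \<nu> \<Omega> s f j else 0)"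
      using that by simp
  qed
  show ?thesis
    unfolding S_has_sum_def koopman_resolvent_eq[OF \<nu> s f]
    by (rule S_tendsto_eventually_cong[OF _ S_tendsto_truncations[OF diag_resolvent_S_space(1)[OF \<nu> s f]]])
      (simp add: partial_sum eventually_finite_subsets_at_top_weakI)
qed

section \<open>The Laplace transform of the semigroup\<close>

lemma integral_exp_mult:
  fixes c a :: complex
  assumes c: "c \<noteq> 0" and T: "0 \<le> T"
  shows "integral {0..T} (\<lambda>t. exp (c * of_real t) * a) = (exp (c * of_real T) - 1) / c * a"
proof -
  have "((\<lambda>t. exp (c * of_real t) * a) has_integral
      exp (c * of_real T) / c * a - exp (c * of_real 0) / c * a) {0..T}"
  proof (rule fundamental_theorem_of_calculus[OF T])
    fix x :: real
    have "((\<lambda>z. exp (c * z) / c * a) has_field_derivative exp (c * of_real x) * a) (at (of_real x))"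
      using c by (auto intro!: derivative_eq_intros)
    then show "((\<lambda>t. exp (c * of_real t) / c * a) has_vector_derivative exp (c * of_real x) * a)
        (at x within {0..T})"
      by (rule has_vector_derivative_real_field)
  qed
  moreover have "exp (c * of_real T) / c * a - exp (c * of_real 0) / c * a = (exp (c * of_real T) - 1) / c * a"
    by (simp add: left_diff_distrib diff_divide_distrib)
  ultimately show ?thesis
    by (metis integral_unique)
qed

lemma laplace_partial_eq:
  "laplace_partial d \<nu> \<Omega> s f T i = integral {0..T} (\<lambda>t. exp ((eig d \<nu> \<Omega> i - s) * of_real t) * f i)"
proof -
  have "exp (- s * of_real t) * exp (eig d \<nu> \<Omega> i * of_real t) = exp ((eig d \<nu> \<Omega> i - s) * of_real t)"
    for t :: real
    by (simp add: mult_exp_exp algebra_simps)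
  then show ?thesis
    by (simp add: laplace_partial_def koopman_sg_def mult.assoc[symmetric])
qed

lemma laplace_partial_minus_diag_resolvent:
  assumes \<nu>: "\<forall>j<d. Re (\<nu> j) \<le> 0" and s: "0 < Re s" and T: "0 \<le> T"
  shows "laplace_partial d \<nu> \<Omega> s f T i - diag_resolvent d \<nu> \<Omega> s f i
      = - (exp ((eig d \<nu> \<Omega> i - s) * of_real T) / (s - eig d \<nu> \<Omega> i)) * f i"
proof -
  have nonzero: "s - eig d \<nu> \<Omega> i \<noteq> 0" "eig d \<nu> \<Omega> i - s \<noteq> 0"
    using minus_eig_nonzero[OF \<nu> s, of \<Omega> i] by auto
  have "laplace_partial d \<nu> \<Omega> s f T i
      = (exp ((eig d \<nu> \<Omega> i - s) * of_real T) - 1) / (eig d \<nu> \<Omega> i - s) * f i"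
    by (simp only: laplace_partial_eq integral_exp_mult[OF nonzero(2) T])
  then show ?thesis
    using nonzero by (simp add: diag_resolvent_def field_simps)
qed

lemma norm_laplace_remainder_le:
  assumes \<nu>: "\<forall>j<d. Re (\<nu> j) \<le> 0" and s: "0 < Re s" and T: "0 \<le> T"
  shows "cmod (exp ((eig d \<nu> \<Omega> i - s) * of_real T) / (s - eig d \<nu> \<Omega> i)) \<le> exp (- Re s * T) / Re s"
proof -
  have "Re (eig d \<nu> \<Omega> i - s) * T \<le> - Re s * T"
    using Re_eig_nonpos[OF \<nu>] T by (intro mult_right_mono) auto
  then have "cmod (exp ((eig d \<nu> \<Omega> i - s) * of_real T)) \<le> exp (- Re s * T)"
    by (simp add: norm_exp_eq_Re)
  then show ?thesis
    using Re_le_norm_minus_eig[OF \<nu>, of s \<Omega> i] s by (simp add: norm_divide frac_le)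
qed

lemma laplace_converges_if_Re_pos:
  assumes \<nu>: "\<forall>j<d. Re (\<nu> j) \<le> 0" and s: "0 < Re s" and f: "f \<in> S_space d"
  shows "laplace_converges d \<nu> \<Omega> s f"
proof -
  define E where "E T i = - (exp ((eig d \<nu> \<Omega> i - s) * of_real T) / (s - eig d \<nu> \<Omega> i))" for T i
  have E_le: "cmod (E T i) \<le> exp (- Re s * T) / Re s" if "0 \<le> T" for T i
    using norm_laplace_remainder_le[OF \<nu> s that] by (simp add: E_def)
  have R: "diag_resolvent d \<nu> \<Omega> s f \<in> S_space d"
    by (rule diag_resolvent_S_space(1)[OF \<nu> s f])
  have diff: "(\<lambda>i. laplace_partial d \<nu> \<Omega> s f T i - diag_resolvent d \<nu> \<Omega> s f i) = (\<lambda>i. E T i * f i)"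
    if "0 \<le> T" for T
    using laplace_partial_minus_diag_resolvent[OF \<nu> s that] by (simp add: E_def)
  have "\<forall>\<^sub>F T in at_top. laplace_partial d \<nu> \<Omega> s f T \<in> S_space d"
    using eventually_ge_at_top[of 0]
  proof eventually_elim
    case (elim T)
    have "(\<lambda>i. diag_resolvent d \<nu> \<Omega> s f i - (- E T i * f i)) \<in> S_space d"
      by (intro S_space_diff R S_space_mult(1)[OF f]) (use E_le[OF elim] in simp)
    moreover have "(\<lambda>i. diag_resolvent d \<nu> \<Omega> s f i - (- E T i * f i)) = laplace_partial d \<nu> \<Omega> s f T"
      using diff[OF elim] by (simp add: fun_eq_iff algebra_simps)
    ultimately show ?case
      by simp
  qed
  moreover have "((\<lambda>T. S_norm d (\<lambda>i. laplace_partial d \<nu> \<Omega> s f T i - diag_resolvent d \<nu> \<Omega> s f i))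
      \<longlongrightarrow> 0) at_top"
  proof (rule tendsto_sandwich[OF _ _ tendsto_const])
    show "\<forall>\<^sub>F T in at_top. 0 \<le> S_norm d (\<lambda>i. laplace_partial d \<nu> \<Omega> s f T i - diag_resolvent d \<nu> \<Omega> s f i)"
      by (simp add: S_norm_nonneg)
    show "\<forall>\<^sub>F T in at_top. S_norm d (\<lambda>i. laplace_partial d \<nu> \<Omega> s f T i - diag_resolvent d \<nu> \<Omega> s f i)
        \<le> exp (- Re s * T) / Re s * S_norm d f"
      using eventually_ge_at_top[of 0]
      by eventually_elim (use S_space_mult(2)[OF f E_le] in \<open>simp add: diff\<close>)
    have "((\<lambda>T. exp (- Re s * T)) \<longlongrightarrow> 0) at_top"
      using s by (intro filterlim_compose[OF exp_at_bot]
          filterlim_tendsto_neg_mult_at_bot[OF tendsto_const _ filterlim_ident]) auto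
    then show "((\<lambda>T. exp (- Re s * T) / Re s * S_norm d f) \<longlongrightarrow> 0) at_top"
      by (intro tendsto_mult_left_zero tendsto_divide_zero)
  qed
  ultimately have "S_tendsto d (laplace_partial d \<nu> \<Omega> s f) (diag_resolvent d \<nu> \<Omega> s f) at_top"
    using R by (simp add: S_tendsto_def)
  then show ?thesis
    unfolding laplace_converges_def by blast
qed

lemma exp_not_convergent:
  fixes c :: complex
  assumes "0 \<le> Re c" and "c \<noteq> 0"
  shows "\<not> ((\<lambda>T::real. exp (c * of_real T)) \<longlongrightarrow> M) at_top"
proof
  assume lim: "((\<lambda>T::real. exp (c * of_real T)) \<longlongrightarrow> M) at_top"
  have "1 \<le> cmod M"
  proof (rule tendsto_lowerbound[OF tendsto_norm[OF lim]])
    show "\<forall>\<^sub>F T in at_top. 1 \<le> cmod (exp (c * of_real T))"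
      using eventually_ge_at_top[of 0] by eventually_elim (use assms(1) in \<open>simp add: norm_exp_eq_Re\<close>)
  qed simp
  \<comment> \<open>M is fixed by multiplication with exp (c h) for every h > 0, but exp (c h) \<noteq> 1 as soon as
    0 < |c h| < 2 pi.\<close>
  define h where "h = 1 / (cmod c + 1)"
  have h: "0 < h" "cmod c * h < 1"
    by (simp_all add: h_def add_nonneg_pos divide_less_eq)
  have "((\<lambda>T::real. exp (c * of_real (h + T))) \<longlongrightarrow> M) at_top"
    by (rule filterlim_compose[OF lim filterlim_tendsto_add_at_top[OF tendsto_const filterlim_ident]])
  moreover have "(\<lambda>T::real. exp (c * of_real (h + T))) = (\<lambda>T. exp (c * of_real h) * exp (c * of_real T))"
    by (simp add: mult_exp_exp algebra_simps)
  then have "((\<lambda>T::real. exp (c * of_real (h + T))) \<longlongrightarrow> exp (c * of_real h) * M) at_top"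
    using tendsto_mult[OF tendsto_const lim] by simp
  ultimately have "exp (c * of_real h) * M = M"
    using tendsto_unique[OF trivial_limit_at_top_linorder] by blast
  then have "exp (c * of_real h) = 1"
    using \<open>1 \<le> cmod M\<close> by auto
  then obtain k :: int where re: "Re (c * of_real h) = 0" and im: "Im (c * of_real h) = of_int (2 * k) * pi"
    unfolding exp_eq_1 by blast
  have "\<bar>of_int (2 * k) * pi\<bar> < 1"
    using abs_Im_le_cmod[of "c * of_real h"] h im by (simp add: norm_mult)
  have "k = 0"
  proof (rule ccontr)
    assume "k \<noteq> 0"
    then have "1 \<le> \<bar>real_of_int k\<bar>"
      by linarith
    then have "2 * pi \<le> \<bar>of_int (2 * k) * pi\<bar>"
      by (simp add: abs_mult)
    with \<open>\<bar>of_int (2 * k) * pi\<bar> < 1\<close> pi_gt3 show False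
      by linarith
  qed
  then have "c * of_real h = 0"
    using re im by (simp add: complex_eq_iff)
  then show False
    using assms(2) h(1) by simp
qed

lemma integral_exp_not_convergent:
  assumes s: "Re s \<le> 0"
  shows "\<not> ((\<lambda>T. integral {0..T} (\<lambda>t. exp (- s * of_real t))) \<longlongrightarrow> l) at_top"
proof
  assume lim: "((\<lambda>T. integral {0..T} (\<lambda>t. exp (- s * of_real t))) \<longlongrightarrow> l) at_top"
  show False
  proof (cases "s = 0")
    case True
    have "\<forall>\<^sub>F T in at_top. integral {0..T} (\<lambda>t. exp (- s * of_real t)) = of_real T"
      using eventually_ge_at_top[of 0] by eventually_elim (simp add: True scaleR_conv_of_real)
    with lim have "((\<lambda>T. Re (complex_of_real T)) \<longlongrightarrow> Re l) at_top"
      by (intro tendsto_Re) (rule Lim_transform_eventually)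
    then show False
      using not_tendsto_and_filterlim_at_infinity[OF _ _ filterlim_at_top_imp_at_infinity[OF filterlim_ident]]
      by auto
  next
    case False
    have "\<forall>\<^sub>F T in at_top. (- s) * integral {0..T} (\<lambda>t. exp (- s * of_real t)) + 1
        = exp (- s * of_real T)"
      using eventually_ge_at_top[of 0]
    proof eventually_elim
      case (elim T)
      have "integral {0..T} (\<lambda>t. exp (- s * of_real t)) = (exp (- s * of_real T) - 1) / (- s)"
        using integral_exp_mult[of "- s" T 1] False elim by simp
      then show ?case
        using False by (simp only:) (simp add: field_simps)
    qed
    moreover have "((\<lambda>T. (- s) * integral {0..T} (\<lambda>t. exp (- s * of_real t)) + 1)
        \<longlongrightarrow> (- s) * l + 1) at_top"
      by (intro tendsto_intros lim)
    ultimately have "((\<lambda>T::real. exp (- s * of_real T)) \<longlongrightarrow> (- s) * l + 1) at_top"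
      by (rule Lim_transform_eventually[rotated])
    then show False
      using exp_not_convergent[of "- s"] s False by simp
  qed
qed

lemma laplace_diverges_if_Re_nonpos:
  assumes s: "Re s \<le> 0"
  shows "\<exists>f\<in>S_space d. \<not> laplace_converges d \<nu> \<Omega> s f"
proof
  define i0 :: idx where "i0 = (\<lambda>_. 0, 0)"
  define f :: coeffs where "f i = (if i = i0 then 1 else 0)" for i
  have i0: "i0 \<in> idx_set d"
    by (simp add: i0_def idx_set_def)
  have "(\<lambda>i. (cmod (f i))\<^sup>2 * weight d i) summable_on idx_set d"
    unfolding summable_on_def by (rule exI, rule has_sum_finite_neutralI[of "{i0}"]) (use i0 in \<open>auto simp: f_def\<close>)
  then show "f \<in> S_space d"
    using i0 by (auto simp: S_space_def f_def)
  have partial: "laplace_partial d \<nu> \<Omega> s f T i0 = integral {0..T} (\<lambda>t. exp (- s * of_real t))" for T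
    by (simp add: laplace_partial_eq f_def eig_def i0_def)
  show "\<not> laplace_converges d \<nu> \<Omega> s f"
  proof
    assume "laplace_converges d \<nu> \<Omega> s f"
    then obtain g where "S_tendsto d (laplace_partial d \<nu> \<Omega> s f) g at_top"
      unfolding laplace_converges_def by blast
    from S_tendsto_coeff[OF this i0] show False
      using integral_exp_not_convergent[OF s] by (simp add: partial)
  qed
qed

theorem theorem3:
  fixes n :: nat and \<Omega> :: real and \<nu> \<mu> :: "nat \<Rightarrow> complex"
  assumes "n \<ge> 2" and "\<Omega> > 0"
    and "\<forall>j<n-1. \<mu> j = exp (complex_of_real (2 * pi) * \<nu> j / complex_of_real \<Omega>)"
    and "inj_on \<mu> {..<n-1}"
    and "\<forall>i j. i \<le> j \<longrightarrow> j < n-1 \<longrightarrow> cmod (\<mu> j) \<le> cmod (\<mu> i)"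
    and "\<forall>j<n-1. cmod (\<mu> j) < 1"
    and "\<forall>j<n-1. Re (\<nu> j) < 0"
  shows "(\<forall>s. 0 < Re s \<longrightarrow>
            s \<in> koopman_resolvent_set (n-1) \<nu> \<Omega> \<and>
            (\<forall>f\<in>S_space (n-1).
               S_has_sum (n-1)
                 (\<lambda>i. \<lambda>j. proj i f j / (s - eig (n-1) \<nu> \<Omega> i))
                 (koopman_resolvent (n-1) \<nu> \<Omega> s f)))
       \<and> {s. \<forall>f\<in>S_space (n-1). laplace_converges (n-1) \<nu> \<Omega> s f} = {s. 0 < Re s}"
proof -
  have \<nu>: "\<forall>j<n-1. Re (\<nu> j) \<le> 0"
    using assms(7) by (simp add: less_imp_le)
  have "{s. \<forall>f\<in>S_space (n-1). laplace_converges (n-1) \<nu> \<Omega> s f} = {s. 0 < Re s}"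
    using laplace_converges_if_Re_pos[OF \<nu>] laplace_diverges_if_Re_nonpos[of _ "n-1" \<nu> \<Omega>]
    by (metis (mono_tags) mem_Collect_eq not_le)
  then show ?thesis
    using mem_koopman_resolvent_set[OF \<nu>] koopman_resolvent_has_sum[OF \<nu>] by blast
qed

end
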